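(* Let $n, t', r$ be positive integers and let $T$ be a $(t'+2r)$-element subset of $[n]$. For any distinct $A, B\in \binom{T}{r+t'}$, setting $w=\left\lfloor\frac{|A \cap B|}{t'}\right\rfloor+1$, there exist $A_1, A_2, \ldots, A_{2w} \in \binom{T}{r+t'}$ such that (1) $|A_i \cap A_{i+1}|=t'$ for $i=1,\ldots, 2w-1$; (2) $A_1=B$ and $A_{2w}=A$.
   Context: $[n]=\{1,\dots,n\}$ and $\binom{D}{k}$ denotes the family of all $k$-element subsets of a finite set $D$. *)

theory Defs
  imports Main
begin

definition ksubsets :: "'a set \<Rightarrow> nat \<Rightarrow> 'a set set" where
  "ksubsets D k = {S. S \<subseteq> D \<and> card S = k}"

end

theory Submission
  imports Defs
begin

text \<open>
  Inside a set \<open>T\<close> with \<open>|T| = t + 2r\<close>, two \<open>(r+t)\<close>-subsets \<open>A, B\<close> meet in at least \<open>t\<close>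
  points, the surplus being the number of points of \<open>T\<close> outside \<open>A \<union> B\<close>. For every
  \<open>t\<close>-subset \<open>S\<close> of \<open>B\<close>, the set \<open>(T - B) \<union> S\<close> is again an \<open>(r+t)\<close>-subset, meeting \<open>B\<close>
  in exactly \<open>S\<close>. Two such moves, chosen to trade up to \<open>t\<close> points of \<open>A \<inter> B\<close> for points
  outside \<open>A \<union> B\<close>, lead from \<open>B\<close> to some \<open>Y\<close> with \<open>|A \<inter> Y| = max t (|A \<inter> B| - t)\<close>.
  Hence if \<open>|A \<inter> B| \<le> m t\<close>, then \<open>m - 1\<close> double moves bring the intersection with \<open>A\<close> down
  to \<open>t\<close>, and one last move reaches \<open>A\<close>: a walk through \<open>2m\<close> sets.
\<close>

text \<open>For \<open>m = 0\<close> the walk condition holds for all \<open>B\<close> and \<open>A\<close>; hence \<open>0 < m\<close> in \<open>int_walk_Cons\<close>.\<close>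

definition int_walk :: "'a set set \<Rightarrow> nat \<Rightarrow> nat \<Rightarrow> 'a set \<Rightarrow> 'a set \<Rightarrow> bool" where
  "int_walk F t m B A \<longleftrightarrow>
    (\<exists>As. (\<forall>i\<in>{1..m}. As i \<in> F) \<and> (\<forall>i\<in>{1..m-1}. card (As i \<inter> As (i+1)) = t) \<and>
          As 1 = B \<and> As m = A)"

lemma int_walk_refl: "A \<in> F \<Longrightarrow> int_walk F t 1 A A"
  unfolding int_walk_def by (rule exI[of _ "\<lambda>_. A"]) simp

lemma int_walk_Cons:
  assumes walk: "int_walk F t m Y A" and "0 < m"
    and "B \<in> F" and "card (B \<inter> Y) = t"
  shows "int_walk F t (Suc m) B A"
proof -
  obtain As where As: "\<forall>i\<in>{1..m}. As i \<in> F" "\<forall>i\<in>{1..m-1}. card (As i \<inter> As (i+1)) = t"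
    "As 1 = Y" "As m = A"
    using walk unfolding int_walk_def by blast
  define Bs where "Bs i = (if i = 1 then B else As (i - 1))" for i
  have "Bs i \<in> F" if "i \<in> {1..Suc m}" for i
  proof (cases "i = 1")
    case False
    with that have "i - 1 \<in> {1..m}" by auto
    with As(1) False show ?thesis by (simp add: Bs_def)
  qed (simp add: Bs_def \<open>B \<in> F\<close>)
  moreover have "card (Bs i \<inter> Bs (i+1)) = t" if "i \<in> {1..Suc m - 1}" for i
  proof (cases "i = 1")
    case False
    with that have "i - 1 \<in> {1..m-1}" and "i - 1 + 1 = i"
      by auto
    with As(2) have "card (As (i - 1) \<inter> As i) = t"
      by (metis (no_types, lifting))
    with False that show ?thesis
      by (simp add: Bs_def)
  qed (use As(3) \<open>card (B \<inter> Y) = t\<close> in \<open>simp add: Bs_def\<close>)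
  moreover have "Bs 1 = B" and "Bs (Suc m) = A"
    using As(4) \<open>0 < m\<close> by (simp_all add: Bs_def)
  ultimately show ?thesis
    unfolding int_walk_def by (intro exI[of _ Bs]) blast
qed

lemma card_Int_ksubsets:
  assumes "finite T" and "card T = t + 2 * r"
    and "A \<in> ksubsets T (r + t)" and "B \<in> ksubsets T (r + t)"
  shows "card (A \<inter> B) = t + card (T - (A \<union> B))"
proof -
  have AB: "A \<subseteq> T" "B \<subseteq> T" "card A = r + t" "card B = r + t"
    using assms(3,4) by (simp_all add: ksubsets_def)
  then have "finite A" "finite B"
    using \<open>finite T\<close> finite_subset by blast+
  then have "card (A \<union> B) + card (A \<inter> B) = 2 * (r + t)"
    using card_Un_Int[OF \<open>finite A\<close> \<open>finite B\<close>] AB by simp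
  moreover have "card (T - (A \<union> B)) = card T - card (A \<union> B)"
    using AB \<open>finite A\<close> \<open>finite B\<close> by (simp add: card_Diff_subset)
  moreover have "card (A \<union> B) \<le> card T"
    using AB \<open>finite T\<close> by (simp add: card_mono)
  ultimately show ?thesis
    using \<open>card T = t + 2 * r\<close> by simp
qed

lemma complement_Un_ksubsets:
  assumes "finite T" and "card T = t + 2 * r"
    and "B \<in> ksubsets T (r + t)" and "S \<subseteq> B" and "card S = t"
  shows "(T - B) \<union> S \<in> ksubsets T (r + t)" and "card (B \<inter> ((T - B) \<union> S)) = t"
proof -
  have B: "B \<subseteq> T" "card B = r + t"
    using assms(3) by (simp_all add: ksubsets_def)
  then have "finite B"
    using \<open>finite T\<close> finite_subset by blast
  then have "finite S"
    using \<open>S \<subseteq> B\<close> finite_subset by blast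
  have "card (T - B) = r"
    using B \<open>finite B\<close> \<open>card T = t + 2 * r\<close> by (simp add: card_Diff_subset)
  moreover have "(T - B) \<inter> S = {}"
    using \<open>S \<subseteq> B\<close> by blast
  ultimately have "card ((T - B) \<union> S) = r + t"
    using card_Un_disjoint[of "T - B" S] \<open>finite T\<close> \<open>finite S\<close> \<open>card S = t\<close> by simp
  moreover have "(T - B) \<union> S \<subseteq> T"
    using B(1) \<open>S \<subseteq> B\<close> by blast
  ultimately show "(T - B) \<union> S \<in> ksubsets T (r + t)"
    unfolding ksubsets_def by blast
  have "B \<inter> ((T - B) \<union> S) = S"
    using \<open>S \<subseteq> B\<close> by blast
  then show "card (B \<inter> ((T - B) \<union> S)) = t"
    using \<open>card S = t\<close> by simp
qed

lemma ksubsets_two_steps_closer: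
  assumes "finite T" and "card T = t + 2 * r"
    and A: "A \<in> ksubsets T (r + t)" and B: "B \<in> ksubsets T (r + t)"
  obtains X Y where "X \<in> ksubsets T (r + t)" "Y \<in> ksubsets T (r + t)"
    "card (B \<inter> X) = t" "card (X \<inter> Y) = t" "card (A \<inter> Y) = max t (card (A \<inter> B) - t)"
proof -
  define j where "j = min t (card (A \<inter> B) - t)"
  have "B \<subseteq> T" "card B = r + t"
    using B by (simp_all add: ksubsets_def)
  have "finite A" "finite B"
    using A B \<open>finite T\<close> finite_subset by (auto simp: ksubsets_def)
  have surplus: "card (A \<inter> B) = t + card (T - (A \<union> B))"
    using card_Int_ksubsets[OF assms] .
  have "j \<le> card (A \<inter> B)" and "j \<le> card (T - (A \<union> B))"
    and "j \<le> t"
    using surplus by (simp_all add: j_def)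
  \<comment> \<open>The points \<open>S0\<close> of \<open>A \<inter> B\<close> are traded for the points \<open>S1\<close> outside \<open>A \<union> B\<close>;
    \<open>S2\<close> pads \<open>S0\<close> to the \<open>t\<close> points that \<open>X\<close> shares with \<open>B\<close>.\<close>
  then obtain S0 S1 where S0: "S0 \<subseteq> A \<inter> B" "card S0 = j"
    and S1: "S1 \<subseteq> T - (A \<union> B)" "card S1 = j"
    by (meson obtain_subset_with_card_n)
  have "finite S0" "finite S1"
    using S0 S1 \<open>finite A\<close> \<open>finite T\<close> finite_subset by blast+
  have "card (B - S0) = r + t - j"
    using S0 \<open>finite S0\<close> \<open>card B = r + t\<close> by (subst card_Diff_subset) auto
  then have "t - j \<le> card (B - S0)"
    by simp
  then obtain S2 where S2: "S2 \<subseteq> B - S0" "card S2 = t - j"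
    by (meson obtain_subset_with_card_n)
  have "finite S2"
    using S2 \<open>finite B\<close> finite_subset by blast
  define X where "X = (T - B) \<union> (S0 \<union> S2)"
  have "S0 \<union> S2 \<subseteq> B"
    using S0 S2 by blast
  have "card (S0 \<union> S2) = t"
    using S0 S2 \<open>finite S0\<close> \<open>finite S2\<close> \<open>j \<le> t\<close> by (subst card_Un_disjoint) auto
  from complement_Un_ksubsets[OF \<open>finite T\<close> \<open>card T = t + 2 * r\<close> B \<open>S0 \<union> S2 \<subseteq> B\<close> this]
  have X: "X \<in> ksubsets T (r + t)" "card (B \<inter> X) = t"
    unfolding X_def .
  define Y where "Y = (T - X) \<union> (S1 \<union> S2)"
  have "S1 \<union> S2 \<subseteq> X"
    using S1 S2 by (auto simp: X_def)
  have "card (S1 \<union> S2) = t"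
    using S1 S2 \<open>finite S1\<close> \<open>finite S2\<close> \<open>j \<le> t\<close> by (subst card_Un_disjoint) auto
  from complement_Un_ksubsets[OF \<open>finite T\<close> \<open>card T = t + 2 * r\<close> X(1) \<open>S1 \<union> S2 \<subseteq> X\<close> this]
  have Y: "Y \<in> ksubsets T (r + t)" "card (X \<inter> Y) = t"
    unfolding Y_def .
  have "T - X = B - (S0 \<union> S2)"
    using \<open>B \<subseteq> T\<close> by (auto simp: X_def)
  then have "Y = (B - S0) \<union> S1"
    using S2 by (auto simp: Y_def)
  then have "A \<inter> Y = (A \<inter> B) - S0"
    using S1 by auto
  then have "card (A \<inter> Y) = max t (card (A \<inter> B) - t)"
    using S0 \<open>finite S0\<close> surplus by (simp add: card_Diff_subset j_def)
  with X Y show ?thesis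
    using that by blast
qed

lemma int_walk_ksubsets:
  assumes "finite T" and "card T = t + 2 * r"
    and "A \<in> ksubsets T (r + t)" and "B \<in> ksubsets T (r + t)"
    and "card (A \<inter> B) \<le> Suc m * t"
  shows "int_walk (ksubsets T (r + t)) t (2 * Suc m) B A"
  using assms(4,5)
proof (induction m arbitrary: B)
  case 0
  then have "card (B \<inter> A) = t"
    using card_Int_ksubsets[OF assms(1-3) "0.prems"(1)] by (simp add: Int_commute)
  have "int_walk (ksubsets T (r + t)) t (Suc 1) B A"
    by (rule int_walk_Cons[OF int_walk_refl[OF assms(3)]]) (use "0.prems"(1) \<open>card (B \<inter> A) = t\<close> in auto)
  then show ?case
    by (simp add: numeral_2_eq_2)
next
  case (Suc m)
  obtain X Y where XY: "X \<in> ksubsets T (r + t)" "Y \<in> ksubsets T (r + t)"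
    "card (B \<inter> X) = t" "card (X \<inter> Y) = t" "card (A \<inter> Y) = max t (card (A \<inter> B) - t)"
    using ksubsets_two_steps_closer[OF assms(1-3) Suc.prems(1)] .
  have "card (A \<inter> Y) \<le> Suc m * t"
    using XY(5) Suc.prems(2) by auto
  then have "int_walk (ksubsets T (r + t)) t (2 * Suc m) Y A"
    using Suc.IH XY(2) by blast
  then have "int_walk (ksubsets T (r + t)) t (Suc (2 * Suc m)) X A"
    by (rule int_walk_Cons) (use XY(1,4) in simp_all)
  then have "int_walk (ksubsets T (r + t)) t (Suc (Suc (2 * Suc m))) B A"
    by (rule int_walk_Cons) (use Suc.prems(1) XY(3) in simp_all)
  then show ?case
    by simp
qed

theorem lemma4p4:
  fixes n t' r :: nat and T A B :: "nat set"
  assumes "n > 0" and "t' > 0" and "r > 0"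
    and "T \<subseteq> {1..n}" and "card T = t' + 2 * r"
    and "A \<in> ksubsets T (r + t')" and "B \<in> ksubsets T (r + t')" and "A \<noteq> B"
  shows "let w = card (A \<inter> B) div t' + 1 in
    \<exists>As :: nat \<Rightarrow> nat set.
      (\<forall>i\<in>{1..2*w}. As i \<in> ksubsets T (r + t')) \<and>
      (\<forall>i\<in>{1..2*w-1}. card (As i \<inter> As (i+1)) = t') \<and>
      As 1 = B \<and> As (2*w) = A"
proof -
  have "finite T"
    using \<open>T \<subseteq> {1..n}\<close> finite_subset by blast
  have "card (A \<inter> B) = card (A \<inter> B) div t' * t' + card (A \<inter> B) mod t'"
    by simp
  moreover have "card (A \<inter> B) mod t' < t'"
    using \<open>t' > 0\<close> by simp
  ultimately have "card (A \<inter> B) \<le> Suc (card (A \<inter> B) div t') * t'"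
    unfolding mult_Suc by linarith
  from int_walk_ksubsets[OF \<open>finite T\<close> assms(5-7) this]
  show ?thesis
    unfolding int_walk_def Let_def by simp
qed

end
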